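(* Let $\varphi\in\mathcal{G}^{\rm dec}_2$ and $1\le q\le p<\infty$, and assume $r^{-n/p}\lesssim\varphi(r)$ for $r>0$. Suppose that a diffeomorphism $\psi:\mathbb{R}^n\to\mathbb{R}^n$ induces a bounded composition operator $C_\psi$ from $\mathcal{M}_q^\varphi(\mathbb{R}^n)$ to itself. Then there is a constant $C>0$ such that for all $x_0\in\mathbb{R}^n$ and all $f\in\mathcal{M}_q^\varphi(\mathbb{R}^n)$, \[ \|f(D\psi(x_0)\,\cdot)\|_{\mathcal{M}_q^\varphi}\le C\|f\|_{\mathcal{M}_q^\varphi}. \]
   Context: $\mathcal{G}^{\rm dec}_2$ is the set of $\varphi:(0,\infty)\to(0,\infty)$ that are almost decreasing (there is $C>0$ with $C\varphi(r)\ge\varphi(s)$ for $r<s$), submultiplicative ($\varphi(rs)\le C\varphi(r)\varphi(s)$), satisfy $\lim_{r\to0}\varphi(r)=\infty$, $\lim_{r\to\infty}\varphi(r)=0$, and $\varphi(1/r)\le C/\varphi(r)$ for some $C>0$. $g\lesssim h$ means $g\le Ch$ for a constant $C>0$. The generalized Morrey space $\mathcal{M}_q^\varphi(\mathbb{R}^n)$ consists of measurable $f$ with $\|f\|_{\mathcal{M}_q^\varphi}=\sup_{a\in\mathbb{R}^n,r>0}\frac1{\varphi(r)}\bigl(\frac1{|B(a,r)|}\int_{B(a,r)}|f(y)|^qdy\bigr)^{1/q}<\infty$. A diffeomorphism is a bijection $\psi$ with $\psi,\psi^{-1}$ differentiable; $D\psi(x_0)$ is its Jacobi matrix at $x_0$;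 $C_\psi f=f\circ\psi$. *)

theory Defs
  imports "HOL-Analysis.Analysis"
begin

definition Gdec2 :: "(real \<Rightarrow> real) set" where
  "Gdec2 = {\<phi>.
     (\<forall>r>0. \<phi> r > 0) \<and>
     (\<exists>C>0. \<forall>r s. 0 < r \<longrightarrow> r < s \<longrightarrow> \<phi> s \<le> C * \<phi> r) \<and>
     (\<exists>C>0. \<forall>r>0. \<forall>s>0. \<phi> (r * s) \<le> C * \<phi> r * \<phi> s) \<and>
     filterlim \<phi> at_top (at_right 0) \<and>
     (\<phi> \<longlongrightarrow> 0) at_top \<and>
     (\<exists>C>0. \<forall>r>0. \<phi> (1 / r) \<le> C / \<phi> r)}"

definition ennroot :: "real \<Rightarrow> ennreal \<Rightarrow> ennreal" where
  "ennroot q x = (if x = top then top else ennreal (enn2real x powr (1 / q)))"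

definition morrey_norm :: "(real \<Rightarrow> real) \<Rightarrow> real \<Rightarrow> (real ^ 'n \<Rightarrow> real) \<Rightarrow> ennreal" where
  "morrey_norm \<phi> q f =
     (SUP ar \<in> (UNIV :: (real ^ 'n) set) \<times> {0<..}.
        ennreal (1 / \<phi> (snd ar)) *
        ennroot q ((\<integral>\<^sup>+ y \<in> ball (fst ar) (snd ar). ennreal (\<bar>f y\<bar> powr q) \<partial>lebesgue)
                   / emeasure lebesgue (ball (fst ar) (snd ar))))"

definition morrey_space :: "(real \<Rightarrow> real) \<Rightarrow> real \<Rightarrow> (real ^ 'n \<Rightarrow> real) set" where
  "morrey_space \<phi> q = {f. f \<in> borel_measurable lebesgue \<and> morrey_norm \<phi> q f < top}"

definition diffeomorphism :: "(real ^ 'n \<Rightarrow> real ^ 'n) \<Rightarrow> bool" where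
  "diffeomorphism \<psi> \<longleftrightarrow> bij \<psi> \<and> (\<forall>x. \<psi> differentiable (at x))
                          \<and> (\<forall>x. inv \<psi> differentiable (at x))"

definition jacobi :: "(real ^ 'n \<Rightarrow> real ^ 'n) \<Rightarrow> real ^ 'n \<Rightarrow> real ^ 'n ^ 'n" where
  "jacobi \<psi> x0 = matrix (frechet_derivative \<psi> (at x0))"

end

(*
  Write A = D psi(x0) and Phi_t y = (psi (x0 + t y) - psi x0) / t.  A dilation by s changes the
  Morrey norm by at most a factor C phi(s), so composing with Phi_t (rescale by 1/t, compose with
  psi, rescale by t) is bounded uniformly in t: the factors phi(t) and phi(1/t) compensate.  As
  t -> 0, Phi_t -> A pointwise, and for lower semicontinuous G Fatou's lemma carries the bound
  over to G o A.  A bounded, compactly supported u >= 0 lies below a staircase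
  delta * sum_j 1_{V_j} over open neighbourhoods V_j of its level sets, which exceeds u by an error
  e that is bounded and has L^1 norm O(delta); by the growth condition r^(-n/p) <~ phi(r) such an
  e has Morrey norm o(1).  Letting delta -> 0 and truncating a general f yields the estimate.
*)
theory Submission
  imports Defs
begin

section \<open>Local integrals and Morrey bounds\<close>

lemma ennreal_divide_le_iff: "b \<noteq> 0 \<Longrightarrow> b \<noteq> top \<Longrightarrow> a / b \<le> c \<longleftrightarrow> a \<le> c * (b :: ennreal)"
  by (cases a; cases b; cases c)
     (auto simp: divide_ennreal ennreal_mult[symmetric] field_simps ennreal_top_mult ennreal_top_divide top_unique)

lemma ennreal_inverse_mult_le_iff:
  assumes "0 < c" "0 \<le> M"
  shows "ennreal (1 / c) * x \<le> ennreal M \<longleftrightarrow> x \<le> ennreal (c * M)"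
  using assms by (cases x) (auto simp: ennreal_mult[symmetric] field_simps ennreal_top_mult top_unique)

lemma ennroot_le_iff:
  assumes "0 < q" and "0 \<le> c"
  shows "ennroot q x \<le> ennreal c \<longleftrightarrow> x \<le> ennreal (c powr q)"
proof (cases x)
  case (real s)
  have "s powr (1 / q) \<le> c \<longleftrightarrow> s \<le> c powr q" if "0 \<le> s"
    using assms that powr_mono2[of q "s powr (1/q)" c] powr_mono2[of "1/q" s "c powr q"]
    by (auto simp: powr_powr)
  then show ?thesis using real assms by (simp add: ennroot_def)
qed (simp add: ennroot_def top_unique)

lemma sets_lebesgue_ball [measurable]: "ball (c :: 'a :: euclidean_space) r \<in> sets lebesgue"
  by (simp add: borel_open)

definition ball_integral :: "real \<Rightarrow> (real ^ 'n \<Rightarrow> real) \<Rightarrow> real ^ 'n \<Rightarrow> real \<Rightarrow> ennreal" where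
  "ball_integral q f a r = (\<integral>\<^sup>+ y \<in> ball a r. ennreal (\<bar>f y\<bar> powr q) \<partial>lebesgue)"

text \<open>\<open>B\<close> bounds the \<open>q\<close>-th power of the Morrey norm (see \<open>morrey_norm_le_iff\<close>); in this form
  the quasi-triangle inequality and the dilation estimates are linear in \<open>B\<close>.\<close>
definition morrey_bounded :: "(real \<Rightarrow> real) \<Rightarrow> real \<Rightarrow> real \<Rightarrow> (real ^ 'n \<Rightarrow> real) \<Rightarrow> bool" where
  "morrey_bounded \<phi> q B f \<longleftrightarrow>
     (\<forall>a r. 0 < r \<longrightarrow> ball_integral q f a r \<le> ennreal (B * \<phi> r powr q * measure lebesgue (ball a r)))"

lemma morrey_boundedI:
  "(\<And>a r. 0 < r \<Longrightarrow> ball_integral q f a r \<le> ennreal (B * \<phi> r powr q * measure lebesgue (ball a r)))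
    \<Longrightarrow> morrey_bounded \<phi> q B f"
  by (simp add: morrey_bounded_def)

lemma morrey_boundedD:
  "morrey_bounded \<phi> q B f \<Longrightarrow> 0 < r
    \<Longrightarrow> ball_integral q f a r \<le> ennreal (B * \<phi> r powr q * measure lebesgue (ball a r))"
  by (simp add: morrey_bounded_def)

lemma morrey_norm_le_iff:
  assumes \<phi>: "\<And>r. 0 < r \<Longrightarrow> 0 < \<phi> r" and q: "0 < q" and M: "0 \<le> M"
  shows "morrey_norm \<phi> q f \<le> ennreal M \<longleftrightarrow> morrey_bounded \<phi> q (M powr q) f"
proof -
  have "ennreal (1 / \<phi> r) * ennroot q (ball_integral q f a r / emeasure lebesgue (ball a r)) \<le> ennreal M
    \<longleftrightarrow> ball_integral q f a r \<le> ennreal (M powr q * \<phi> r powr q * measure lebesgue (ball a r))"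
    if r: "0 < r" for a r
  proof -
    have \<phi>r: "0 < \<phi> r" and m: "0 < measure lebesgue (ball a r)"
      using \<phi> r by auto
    have "ennreal (1 / \<phi> r) * ennroot q (ball_integral q f a r / emeasure lebesgue (ball a r)) \<le> ennreal M
      \<longleftrightarrow> ball_integral q f a r / emeasure lebesgue (ball a r) \<le> ennreal ((\<phi> r * M) powr q)"
      using \<phi>r M q by (simp add: ennreal_inverse_mult_le_iff ennroot_le_iff)
    also have "\<dots> \<longleftrightarrow> ball_integral q f a r \<le> ennreal ((\<phi> r * M) powr q) * ennreal (measure lebesgue (ball a r))"
      using m by (simp add: emeasure_eq_measure2 ennreal_divide_le_iff)
    finally show ?thesis
      using \<phi>r M by (simp add: ennreal_mult[symmetric] powr_mult mult_ac)
  qed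
  then show ?thesis
    by (auto simp: morrey_norm_def morrey_bounded_def ball_integral_def[symmetric] SUP_le_iff)
qed

lemma morrey_space_if_bounded:
  assumes "\<And>r. 0 < r \<Longrightarrow> 0 < \<phi> r" "0 < q" "0 \<le> B"
    and "f \<in> borel_measurable lebesgue" "morrey_bounded \<phi> q B f"
  shows "f \<in> morrey_space \<phi> q" and "morrey_norm \<phi> q f \<le> ennreal (B powr (1 / q))"
proof -
  show "morrey_norm \<phi> q f \<le> ennreal (B powr (1 / q))"
    using assms by (simp add: morrey_norm_le_iff powr_powr)
  then show "f \<in> morrey_space \<phi> q"
    using assms(4) by (auto simp: morrey_space_def le_less_trans)
qed

lemma morrey_bounded_mono_bound:
  "morrey_bounded \<phi> q B f \<Longrightarrow> B \<le> B' \<Longrightarrow> morrey_bounded \<phi> q B' f"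
  unfolding morrey_bounded_def
  by (meson ennreal_leI measure_nonneg mult_right_mono order_trans powr_ge_zero)

lemma ball_integral_mono:
  assumes "0 < q" "\<And>y. \<bar>f y\<bar> \<le> \<bar>g y\<bar>"
  shows "ball_integral q f a r \<le> ball_integral q g a r"
  unfolding ball_integral_def using assms
  by (intro nn_integral_mono mult_right_mono ennreal_leI powr_mono2) auto

lemma morrey_bounded_mono:
  assumes "0 < q" "\<And>y. \<bar>f y\<bar> \<le> \<bar>g y\<bar>" "morrey_bounded \<phi> q B g"
  shows "morrey_bounded \<phi> q B f"
  using assms ball_integral_mono[of q f g] by (meson morrey_bounded_def order_trans)

lemma powr_add_le:
  fixes x y q :: real
  assumes "0 \<le> x" "0 \<le> y" "0 < q"
  shows "(x + y) powr q \<le> 2 powr q * (x powr q + y powr q)"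
proof -
  have "(x + y) powr q \<le> (2 * max x y) powr q"
    using assms by (intro powr_mono2) auto
  also have "\<dots> \<le> 2 powr q * (x powr q + y powr q)"
    using assms by (simp add: powr_mult max_def)
  finally show ?thesis .
qed

lemma morrey_bounded_add:
  fixes f u e :: "real ^ 'n \<Rightarrow> real"
  assumes q: "0 < q" and u: "u \<in> borel_measurable lebesgue" and e: "e \<in> borel_measurable lebesgue"
    and f: "\<And>y. \<bar>f y\<bar> \<le> \<bar>u y\<bar> + \<bar>e y\<bar>"
    and "morrey_bounded \<phi> q B u" "morrey_bounded \<phi> q B' e" "0 \<le> B" "0 \<le> B'"
  shows "morrey_bounded \<phi> q (2 powr q * (B + B')) f"
proof (rule morrey_boundedI)
  fix a :: "real ^ 'n" and r :: real
  assume r: "0 < r"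
  let ?m = "measure lebesgue (ball a r)"
  have "ball_integral q f a r
      \<le> (\<integral>\<^sup>+ y \<in> ball a r. ennreal (2 powr q) * (ennreal (\<bar>u y\<bar> powr q) + ennreal (\<bar>e y\<bar> powr q)) \<partial>lebesgue)"
    unfolding ball_integral_def
  proof (intro nn_integral_mono mult_right_mono)
    fix y
    have "\<bar>f y\<bar> powr q \<le> (\<bar>u y\<bar> + \<bar>e y\<bar>) powr q"
      using f q by (intro powr_mono2) auto
    also have "\<dots> \<le> 2 powr q * (\<bar>u y\<bar> powr q + \<bar>e y\<bar> powr q)"
      using q by (intro powr_add_le) auto
    finally show "ennreal (\<bar>f y\<bar> powr q) \<le> ennreal (2 powr q) * (ennreal (\<bar>u y\<bar> powr q) + ennreal (\<bar>e y\<bar> powr q))"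
      by (simp add: ennreal_mult'[symmetric] ennreal_plus[symmetric] del: ennreal_plus)
  qed simp
  also have "\<dots> = ennreal (2 powr q) * (\<integral>\<^sup>+ y. ennreal (\<bar>u y\<bar> powr q) * indicator (ball a r) y
      + ennreal (\<bar>e y\<bar> powr q) * indicator (ball a r) y \<partial>lebesgue)"
    using u e by (subst nn_integral_cmult[symmetric]) (auto simp: ring_distribs mult_ac)
  also have "\<dots> = ennreal (2 powr q) * (ball_integral q u a r + ball_integral q e a r)"
    unfolding ball_integral_def using u e by (subst nn_integral_add) auto
  also have "\<dots> \<le> ennreal (2 powr q) * (ennreal (B * \<phi> r powr q * ?m) + ennreal (B' * \<phi> r powr q * ?m))"
    using assms r by (intro mult_left_mono add_mono morrey_boundedD) auto
  also have "\<dots> = ennreal (2 powr q * (B + B') * \<phi> r powr q * ?m)"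
    using assms by (simp add: ennreal_mult'[symmetric] ennreal_plus[symmetric] algebra_simps del: ennreal_plus)
  finally show "ball_integral q f a r \<le> ennreal (2 powr q * (B + B') * \<phi> r powr q * ?m)" .
qed

lemma morrey_bounded_limit:
  fixes f :: "real ^ 'n \<Rightarrow> real"
  assumes "F \<noteq> bot" and "(b \<longlongrightarrow> B) F" and "\<forall>\<^sub>F \<delta> in F. morrey_bounded \<phi> q (b \<delta>) f"
  shows "morrey_bounded \<phi> q B f"
proof (rule morrey_boundedI)
  fix a :: "real ^ 'n" and r :: real
  assume r: "0 < r"
  let ?c = "\<phi> r powr q * measure lebesgue (ball a r)"
  have "((\<lambda>\<delta>. ennreal (b \<delta> * ?c)) \<longlongrightarrow> ennreal (B * ?c)) F"
    by (intro tendsto_ennrealI tendsto_mult_right assms(2))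
  moreover have "\<forall>\<^sub>F \<delta> in F. ball_integral q f a r \<le> ennreal (b \<delta> * ?c)"
    using assms(3) by (rule eventually_mono) (metis morrey_boundedD r mult.assoc)
  ultimately show "ball_integral q f a r \<le> ennreal (B * \<phi> r powr q * measure lebesgue (ball a r))"
    using tendsto_lowerbound assms(1) by (simp add: mult.assoc) blast
qed

section \<open>Dilations\<close>

lemma lebesgue_scale_measurable:
  fixes c :: "'a::euclidean_space"
  assumes "s \<noteq> 0"
  shows "(\<lambda>x. c + s *\<^sub>R x) \<in> lebesgue \<rightarrow>\<^sub>M lebesgue"
  using lebesgue_affine_measurable[where c="\<lambda>_::'a. s" and t=c] assms
  unfolding scaleR_scaleR[symmetric] scaleR_sum_right[symmetric] euclidean_representation
  by auto

lemma nn_integral_lebesgue_scale: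
  fixes c :: "'a::euclidean_space"
  assumes W: "W \<in> borel_measurable lebesgue" and s: "0 < s"
  shows "(\<integral>\<^sup>+x. W x \<partial>lebesgue) = ennreal (s ^ DIM('a)) * (\<integral>\<^sup>+y. W (c + s *\<^sub>R y) \<partial>lebesgue)"
proof -
  have eq: "density (distr lebesgue lebesgue (\<lambda>x. c + s *\<^sub>R x)) (\<lambda>_. ennreal (s ^ DIM('a))) = lebesgue"
    using lebesgue_affine_euclidean[where c="\<lambda>_::'a. s" and t=c] s
    unfolding scaleR_scaleR[symmetric] scaleR_sum_right[symmetric] euclidean_representation
    by (simp add: prod_constant)
  have "(\<integral>\<^sup>+x. W x \<partial>lebesgue)
      = (\<integral>\<^sup>+x. W x \<partial>density (distr lebesgue lebesgue (\<lambda>x. c + s *\<^sub>R x)) (\<lambda>_. ennreal (s ^ DIM('a))))"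
    by (simp only: eq)
  also have "\<dots> = ennreal (s ^ DIM('a)) * (\<integral>\<^sup>+y. W (c + s *\<^sub>R y) \<partial>lebesgue)"
    using W lebesgue_scale_measurable[of s c] s
    by (simp add: nn_integral_density nn_integral_distr nn_integral_cmult)
  finally show ?thesis .
qed

lemma ball_integral_affine:
  fixes u :: "real ^ 'n \<Rightarrow> real"
  assumes u: "u \<in> borel_measurable lebesgue" and s: "0 < s"
  shows "ball_integral q u (c + s *\<^sub>R a) (s * r)
    = ennreal (s ^ CARD('n)) * ball_integral q (\<lambda>y. u (c + s *\<^sub>R y)) a r"
proof -
  have "c + s *\<^sub>R y \<in> ball (c + s *\<^sub>R a) (s * r) \<longleftrightarrow> y \<in> ball a r" for y
    using s by (simp add: dist_norm scaleR_diff_right[symmetric])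
  moreover have "(\<lambda>x. ennreal (\<bar>u x\<bar> powr q) * indicator (ball (c + s *\<^sub>R a) (s * r)) x)
      \<in> borel_measurable lebesgue"
    using u by measurable
  ultimately show ?thesis
    unfolding ball_integral_def using s
    by (subst nn_integral_lebesgue_scale[where c=c and s=s]) (auto simp: indicator_def)
qed

lemma measure_ball_affine:
  fixes c a :: "'a::euclidean_space"
  assumes "0 < s" "0 \<le> r"
  shows "measure lebesgue (ball (c + s *\<^sub>R a) (s * r)) = s ^ DIM('a) * measure lebesgue (ball a r)"
  using assms content_ball_conv_unit_ball[of "s * r" "c + s *\<^sub>R a"] content_ball_conv_unit_ball[of r a]
  by (simp add: power_mult_distrib)

lemma morrey_bounded_dilation:
  fixes u :: "real ^ 'n \<Rightarrow> real"
  assumes \<phi>: "\<And>r. 0 < r \<Longrightarrow> 0 < \<phi> r"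
    and submult: "\<And>r s. 0 < r \<Longrightarrow> 0 < s \<Longrightarrow> \<phi> (r * s) \<le> Cs * \<phi> r * \<phi> s"
    and q: "0 < q" and u: "u \<in> borel_measurable lebesgue" and B: "0 \<le> B"
    and bounded: "morrey_bounded \<phi> q B u" and s: "0 < s"
  shows "morrey_bounded \<phi> q ((Cs * \<phi> s) powr q * B) (\<lambda>y. u (c + s *\<^sub>R y))"
proof (rule morrey_boundedI)
  fix a :: "real ^ 'n" and r :: real
  assume r: "0 < r"
  have Cs: "0 < Cs"
    using submult[OF s r] \<phi>[of "s * r"] \<phi>[OF s] \<phi>[OF r] s r by (smt (verit) mult_pos_pos zero_less_mult_pos2)
  have submult_q: "\<phi> (s * r) powr q \<le> (Cs * \<phi> s) powr q * \<phi> r powr q"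
    using submult[OF s r] \<phi>[of "s * r"] s r q Cs \<phi>[OF s] by (simp add: powr_mult[symmetric] powr_mono2)
  have le: "B * \<phi> (s * r) powr q * measure lebesgue (ball a r)
      \<le> (Cs * \<phi> s) powr q * B * \<phi> r powr q * measure lebesgue (ball a r)"
    using mult_left_mono[OF submult_q, of "B * measure lebesgue (ball a r)"] B by (simp add: mult_ac)
  have "ennreal (s ^ CARD('n)) * ball_integral q (\<lambda>y. u (c + s *\<^sub>R y)) a r
      = ball_integral q u (c + s *\<^sub>R a) (s * r)"
    using ball_integral_affine[OF u s] by simp
  also have "\<dots> \<le> ennreal (B * \<phi> (s * r) powr q * (s ^ CARD('n) * measure lebesgue (ball a r)))"
    using morrey_boundedD[OF bounded, of "s * r" "c + s *\<^sub>R a"] measure_ball_affine[OF s, of r c a] s r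
    by simp
  also have "\<dots> = ennreal (s ^ CARD('n)) * ennreal (B * \<phi> (s * r) powr q * measure lebesgue (ball a r))"
    using s by (simp add: ennreal_mult'[symmetric] mult_ac)
  finally show "ball_integral q (\<lambda>y. u (c + s *\<^sub>R y)) a r
      \<le> ennreal ((Cs * \<phi> s) powr q * B * \<phi> r powr q * measure lebesgue (ball a r))"
    using s le by (subst (asm) ennreal_mult_le_mult_iff) (auto intro: order_trans ennreal_leI)
qed

section \<open>Bounded functions with small integral\<close>

lemma min_le_powr_interpolation:
  fixes X Y \<theta> :: real
  assumes "0 \<le> X" "0 \<le> Y" "0 \<le> \<theta>" "\<theta> \<le> 1"
  shows "min X Y \<le> X powr (1 - \<theta>) * Y powr \<theta>"
proof (cases "min X Y = 0")
  case False
  then have "0 < min X Y" using assms by linarith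
  then have "min X Y = min X Y powr (1 - \<theta>) * min X Y powr \<theta>"
    by (simp add: powr_add[symmetric])
  also have "\<dots> \<le> X powr (1 - \<theta>) * Y powr \<theta>"
    using assms \<open>0 < min X Y\<close> by (intro mult_mono powr_mono2) auto
  finally show ?thesis .
qed (use assms in simp)

lemma nn_integral_powr_le:
  assumes "e \<in> borel_measurable M" and "\<And>x. 0 \<le> e x" and "\<And>x. e x \<le> a" and "1 \<le> q"
  shows "(\<integral>\<^sup>+x. ennreal (\<bar>e x\<bar> powr q) \<partial>M) \<le> ennreal (a powr (q - 1)) * (\<integral>\<^sup>+x. ennreal (e x) \<partial>M)"
proof -
  have "(\<integral>\<^sup>+x. ennreal (\<bar>e x\<bar> powr q) \<partial>M) \<le> (\<integral>\<^sup>+x. ennreal (a powr (q - 1)) * ennreal (e x) \<partial>M)"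
  proof (intro nn_integral_mono)
    fix x
    have "\<bar>e x\<bar> powr q = e x powr (q - 1) * e x"
      using assms(2)[of x] assms(4) by (cases "e x = 0") (simp_all add: powr_diff)
    also have "\<dots> \<le> a powr (q - 1) * e x"
      using assms(2-4) by (intro mult_right_mono powr_mono2) auto
    finally show "ennreal (\<bar>e x\<bar> powr q) \<le> ennreal (a powr (q - 1)) * ennreal (e x)"
      by (simp add: ennreal_mult'[symmetric] ennreal_leI)
  qed
  also have "\<dots> = ennreal (a powr (q - 1)) * (\<integral>\<^sup>+x. ennreal (e x) \<partial>M)"
    using assms(1) by (simp add: nn_integral_cmult)
  finally show ?thesis .
qed

lemma morrey_bounded_interpolation:
  fixes e :: "real ^ 'n \<Rightarrow> real"
  assumes \<phi>: "\<And>r. 0 < r \<Longrightarrow> 0 < \<phi> r"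
    and growth: "\<And>r. 0 < r \<Longrightarrow> r powr (- real CARD('n) / p) \<le> Cg * \<phi> r" and Cg: "0 \<le> Cg"
    and q: "0 < q" "q \<le> p"
    and sup: "\<And>x. \<bar>e x\<bar> \<le> a"
    and int: "(\<integral>\<^sup>+x. ennreal (\<bar>e x\<bar> powr q) \<partial>lebesgue) \<le> ennreal b" and b: "0 \<le> b"
  shows "morrey_bounded \<phi> q
    (Cg powr q * (a powr q) powr (1 - q / p) * (b / measure lebesgue (ball (0 :: real ^ 'n) 1)) powr (q / p)) e"
proof (rule morrey_boundedI)
  fix x :: "real ^ 'n" and r :: real
  assume r: "0 < r"
  define m where "m = measure lebesgue (ball x r)"
  define m1 where "m1 = measure lebesgue (ball (0 :: real ^ 'n) 1)"
  have m1: "0 < m1" and m: "m = r ^ CARD('n) * m1"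
    using r content_ball_conv_unit_ball[of r x] by (simp_all add: m_def m1_def)
  have a: "0 \<le> a"
    using sup[of x] by linarith
  have "ball_integral q e x r \<le> (\<integral>\<^sup>+y \<in> ball x r. ennreal (a powr q) \<partial>lebesgue)"
    unfolding ball_integral_def using sup q
    by (intro nn_integral_mono mult_right_mono ennreal_leI powr_mono2) auto
  also have "\<dots> = ennreal (a powr q * m)"
    by (subst nn_integral_cmult_indicator) (auto simp: m_def emeasure_eq_measure2 ennreal_mult)
  finally have "ball_integral q e x r \<le> ennreal (a powr q * m)" .
  moreover have "ball_integral q e x r \<le> ennreal b"
    unfolding ball_integral_def
    by (rule order_trans[OF nn_integral_mono int]) (simp add: indicator_def)
  ultimately have "ball_integral q e x r \<le> ennreal (min (a powr q * m) b)"
    by (simp add: min_def)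
  also have "min (a powr q * m) b \<le> (a powr q * m) powr (1 - q / p) * b powr (q / p)"
    using q a b m m1 r by (intro min_le_powr_interpolation) auto
  also have "\<dots> = (a powr q) powr (1 - q / p) * m * (b / m) powr (q / p)"
    using m m1 r a b by (simp add: powr_mult powr_diff powr_divide field_simps)
  also have "(b / m) powr (q / p) = (b / m1) powr (q / p) * (r powr (- real CARD('n) / p)) powr q"
    using m m1 r b q by (simp add: powr_mult powr_divide powr_powr powr_realpow[symmetric] powr_minus field_simps)
  also have "(r powr (- real CARD('n) / p)) powr q \<le> (Cg * \<phi> r) powr q"
    using growth[OF r] q by (intro powr_mono2) auto
  also have "(a powr q) powr (1 - q / p) * m * ((b / m1) powr (q / p) * (Cg * \<phi> r) powr q)
      = Cg powr q * (a powr q) powr (1 - q / p) * (b / m1) powr (q / p) * \<phi> r powr q * m"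
    using Cg \<phi>[OF r] by (simp add: powr_mult mult_ac)
  finally show "ball_integral q e x r \<le> ennreal (Cg powr q * (a powr q) powr (1 - q / p) * (b / m1) powr (q / p)
      * \<phi> r powr q * m)"
    using m m1 r by (simp add: mult_left_mono ennreal_leI)
qed

section \<open>Passing Morrey bounds to pointwise limits\<close>

lemma ball_integral_le_of_eventually_le:
  assumes g [measurable]: "\<And>k. g k \<in> borel_measurable lebesgue" and q: "0 < q"
    and below: "\<And>y. \<forall>\<^sub>F k in sequentially. \<bar>h y\<bar> \<le> \<bar>g k y\<bar>"
    and bound: "\<And>k. ball_integral q (g k) a r \<le> X"
  shows "ball_integral q h a r \<le> X"
proof -
  let ?G = "\<lambda>k y. ennreal (\<bar>g k y\<bar> powr q) * indicator (ball a r) y"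
  have "ball_integral q h a r \<le> (\<integral>\<^sup>+ y. liminf (\<lambda>k. ?G k y) \<partial>lebesgue)"
    unfolding ball_integral_def
  proof (intro nn_integral_mono Liminf_bounded)
    fix y
    show "\<forall>\<^sub>F k in sequentially. ennreal (\<bar>h y\<bar> powr q) * indicator (ball a r) y \<le> ?G k y"
      using below[of y] by eventually_elim (use q in \<open>auto intro!: mult_right_mono ennreal_leI powr_mono2\<close>)
  qed
  also have "\<dots> \<le> liminf (\<lambda>k. \<integral>\<^sup>+ y. ?G k y \<partial>lebesgue)"
    by (intro nn_integral_liminf) measurable
  also have "\<dots> \<le> X"
    using bound by (intro Liminf_le) (auto simp: ball_integral_def)
  finally show ?thesis .
qed

lemma morrey_bounded_comp_of_truncations:
  fixes f :: "real ^ 'n \<Rightarrow> real" and A :: "real ^ 'n \<Rightarrow> real ^ 'n"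
  assumes A [measurable]: "A \<in> lebesgue \<rightarrow>\<^sub>M lebesgue" and f [measurable]: "f \<in> borel_measurable lebesgue"
    and q: "0 < q"
    and bounded: "\<And>k. morrey_bounded \<phi> q B (\<lambda>y. min \<bar>f (A y)\<bar> (real k) * indicator (ball 0 (real k)) (A y))"
  shows "morrey_bounded \<phi> q B (\<lambda>y. f (A y))"
proof (rule morrey_boundedI)
  fix a :: "real ^ 'n" and r :: real
  assume r: "0 < r"
  show "ball_integral q (\<lambda>y. f (A y)) a r \<le> ennreal (B * \<phi> r powr q * measure lebesgue (ball a r))"
  proof (rule ball_integral_le_of_eventually_le[OF _ q _ morrey_boundedD[OF bounded r]])
    fix y
    obtain k0 :: nat where k0: "\<bar>f (A y)\<bar> + norm (A y) < real k0"
      using reals_Archimedean2 by blast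
    show "\<forall>\<^sub>F k in sequentially.
        \<bar>f (A y)\<bar> \<le> \<bar>min \<bar>f (A y)\<bar> (real k) * indicator (ball 0 (real k)) (A y)\<bar>"
      unfolding eventually_sequentially
    proof (intro exI allI impI)
      fix k assume "k0 \<le> k"
      then have "\<bar>f (A y)\<bar> \<le> real k" "norm (A y) < real k"
        using k0 norm_ge_zero[of "A y"] of_nat_le_iff[of k0 k] by linarith+
      then show "\<bar>f (A y)\<bar> \<le> \<bar>min \<bar>f (A y)\<bar> (real k) * indicator (ball 0 (real k)) (A y)\<bar>"
        by (simp add: indicator_def)
    qed
  qed measurable
qed

lemma sum_indicator_open_eventually_ge:
  assumes "\<And>j. open (V j)" and "(z \<longlongrightarrow> z0) F"
  shows "\<forall>\<^sub>F k in F. (\<Sum>j\<in>J. indicator (V j) z0) \<le> (\<Sum>j\<in>J. indicator (V j) (z k) :: real)"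
proof (cases "finite J")
  case True
  have "\<forall>\<^sub>F k in F. \<forall>j\<in>J. z0 \<in> V j \<longrightarrow> z k \<in> V j"
    using True
  proof (rule eventually_ball_finite, intro ballI)
    fix j
    show "\<forall>\<^sub>F k in F. z0 \<in> V j \<longrightarrow> z k \<in> V j"
      by (cases "z0 \<in> V j") (auto intro: topological_tendstoD[OF assms(2) assms(1)])
  qed
  then show ?thesis
    by eventually_elim (auto intro!: sum_mono simp: indicator_def)
qed simp

section \<open>Staircase majorants with open level sets\<close>

lemma staircase_count:
  fixes v \<delta> N :: real
  assumes "0 \<le> v" "v \<le> N" "0 < \<delta>"
  shows "{j \<in> {..nat \<lceil>N / \<delta>\<rceil>}. real j * \<delta> < v} = {..<nat \<lceil>v / \<delta>\<rceil>}"
    and "v \<le> \<delta> * nat \<lceil>v / \<delta>\<rceil>" and "\<delta> * nat \<lceil>v / \<delta>\<rceil> < v + \<delta>"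
proof -
  have "v / \<delta> \<le> N / \<delta>"
    using assms by (simp add: divide_right_mono)
  then have M_le: "nat \<lceil>v / \<delta>\<rceil> \<le> nat \<lceil>N / \<delta>\<rceil>"
    by (intro nat_mono ceiling_mono)
  have iff: "real j * \<delta> < v \<longleftrightarrow> j < nat \<lceil>v / \<delta>\<rceil>" for j
  proof -
    have "j < nat \<lceil>v / \<delta>\<rceil> \<longleftrightarrow> real j < v / \<delta>"
      by (metis less_ceiling_iff of_int_of_nat_eq zless_nat_eq_int_zless)
    then show ?thesis
      using assms by (simp add: pos_less_divide_eq)
  qed
  show "{j \<in> {..nat \<lceil>N / \<delta>\<rceil>}. real j * \<delta> < v} = {..<nat \<lceil>v / \<delta>\<rceil>}"
    unfolding iff by (auto intro: le_trans[OF less_imp_le_nat M_le])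
  have c: "real (nat \<lceil>v / \<delta>\<rceil>) = of_int \<lceil>v / \<delta>\<rceil>"
    using assms by simp
  have up: "v / \<delta> \<le> of_int \<lceil>v / \<delta>\<rceil>" and low: "of_int \<lceil>v / \<delta>\<rceil> < v / \<delta> + 1"
    using ceiling_correct[of "v / \<delta>"] by linarith+
  show "v \<le> \<delta> * nat \<lceil>v / \<delta>\<rceil>"
    using mult_left_mono[OF up, of \<delta>] assms unfolding c by simp
  show "\<delta> * nat \<lceil>v / \<delta>\<rceil> < v + \<delta>"
    using mult_strict_left_mono[OF low, of \<delta>] assms unfolding c by (simp add: distrib_left)
qed

lemma staircase_level_sets:
  fixes u :: "'a \<Rightarrow> real"
  assumes "0 \<le> u x" "u x \<le> N" "0 < \<delta>" "x \<notin> S \<Longrightarrow> u x = 0"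
  defines "E j \<equiv> {y. real j * \<delta> < u y}"
  shows "u x \<le> \<delta> * (\<Sum>j\<le>nat \<lceil>N / \<delta>\<rceil>. indicator (E j) x)"
    and "\<delta> * (\<Sum>j\<le>nat \<lceil>N / \<delta>\<rceil>. indicator (E j) x) \<le> u x + \<delta> * indicator S x"
proof -
  have "(\<Sum>j\<le>nat \<lceil>N / \<delta>\<rceil>. indicator (E j) x :: real) = card {j \<in> {..nat \<lceil>N / \<delta>\<rceil>}. real j * \<delta> < u x}"
    by (simp add: E_def indicator_def sum.If_cases Int_def)
  then have sum_eq: "(\<Sum>j\<le>nat \<lceil>N / \<delta>\<rceil>. indicator (E j) x :: real) = nat \<lceil>u x / \<delta>\<rceil>"
    using staircase_count(1)[OF assms(1-3)] by simp
  show "u x \<le> \<delta> * (\<Sum>j\<le>nat \<lceil>N / \<delta>\<rceil>. indicator (E j) x)"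
    unfolding sum_eq by (rule staircase_count(2)[OF assms(1-3)])
  show "\<delta> * (\<Sum>j\<le>nat \<lceil>N / \<delta>\<rceil>. indicator (E j) x) \<le> u x + \<delta> * indicator S x"
    unfolding sum_eq using staircase_count(3)[OF assms(1-3)] assms(4) by (cases "x \<in> S") auto
qed

lemma nn_integral_staircase_error:
  assumes "S \<in> sets M" and "\<And>j. D j \<in> sets M" and "\<And>j. emeasure M (D j) \<le> ennreal (1 / Suc K)"
    and "0 \<le> \<delta>"
  shows "(\<integral>\<^sup>+x. ennreal (\<delta> * indicator S x + \<delta> * (\<Sum>j\<le>K. indicator (D j) x)) \<partial>M)
    \<le> ennreal \<delta> * (emeasure M S + 1)"
proof -
  have "ennreal (\<delta> * indicator S x + \<delta> * (\<Sum>j\<le>K. indicator (D j) x))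
      = ennreal \<delta> * (indicator S x + (\<Sum>j\<le>K. indicator (D j) x))" for x
    using assms(4) by (simp add: ennreal_mult' ennreal_plus sum_nonneg flip: distrib_left ennreal_indicator sum_ennreal)
  then have "(\<integral>\<^sup>+x. ennreal (\<delta> * indicator S x + \<delta> * (\<Sum>j\<le>K. indicator (D j) x)) \<partial>M)
      = ennreal \<delta> * (emeasure M S + (\<Sum>j\<le>K. emeasure M (D j)))"
    using assms(1,2) by (simp add: nn_integral_cmult nn_integral_add nn_integral_sum)
  also have "(\<Sum>j\<le>K. emeasure M (D j)) \<le> (\<Sum>j\<le>K. ennreal (1 / Suc K))"
    using assms(3) by (intro sum_mono)
  also have "(\<Sum>j\<le>K. ennreal (1 / Suc K)) = 1"
    by (subst sum_ennreal) auto
  finally show ?thesis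
    by (simp add: add_left_mono mult_left_mono)
qed

text \<open>\<open>V j\<close> is an open neighbourhood of the level set \<open>{u > j \<delta>}\<close> with excess measure
  at most \<open>1 / (M + 1)\<close>; \<open>e\<close> collects these excesses together with the rounding error \<open>\<delta>\<close> on \<open>S\<close>.\<close>
lemma open_staircase_majorant:
  fixes u :: "'a::euclidean_space \<Rightarrow> real"
  assumes u [measurable]: "u \<in> borel_measurable lebesgue"
    and u_nonneg: "\<And>x. 0 \<le> u x" and u_le: "\<And>x. u x \<le> N"
    and supp: "\<And>x. x \<notin> S \<Longrightarrow> u x = 0" and S [measurable]: "S \<in> sets lebesgue"
    and \<delta>: "0 < \<delta>" "\<delta> \<le> 1"
  obtains V :: "nat \<Rightarrow> 'a set" and M :: nat and e :: "'a \<Rightarrow> real"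
  where "\<And>j. open (V j)"
    and "\<And>x. u x \<le> \<delta> * (\<Sum>j\<le>M. indicator (V j) x)"
    and "\<And>x. \<delta> * (\<Sum>j\<le>M. indicator (V j) x) \<le> u x + e x"
    and "e \<in> borel_measurable lebesgue" and "\<And>x. 0 \<le> e x" and "\<And>x. e x \<le> N + 3"
    and "(\<integral>\<^sup>+x. ennreal (e x) \<partial>lebesgue) \<le> ennreal \<delta> * (emeasure lebesgue S + 1)"
proof -
  define M where "M = nat \<lceil>N / \<delta>\<rceil>"
  define E where "E j = {x. real j * \<delta> < u x}" for j :: nat
  have E [measurable]: "E j \<in> sets lebesgue" for j
  proof -
    have "{x \<in> space lebesgue. real j * \<delta> < u x} \<in> sets lebesgue"
      by measurable
    then show ?thesis
      by (simp add: E_def)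
  qed
  have "\<exists>T. open T \<and> E j \<subseteq> T \<and> emeasure lebesgue (T - E j) < ennreal (1 / Suc M)" for j
    by (rule sets_lebesgue_outer_open[OF E, of "1 / Suc M"]) auto
  then obtain V where V: "\<And>j. open (V j)" "\<And>j. E j \<subseteq> V j"
    and V_small: "\<And>j. emeasure lebesgue (V j - E j) < ennreal (1 / Suc M)"
    by metis
  have [measurable]: "V j \<in> sets lebesgue" for j
    using V(1) by (simp add: borel_open)
  define e where "e x = \<delta> * indicator S x + \<delta> * (\<Sum>j\<le>M. indicator (V j - E j) x)" for x
  have N: "0 \<le> N"
    using u_nonneg u_le order_trans by blast
  show thesis
  proof (rule that[of V M e])
    show "open (V j)" for j
      by (fact V(1))
    show "u x \<le> \<delta> * (\<Sum>j\<le>M. indicator (V j) x)" for x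
    proof -
      have "u x \<le> \<delta> * (\<Sum>j\<le>M. indicator (E j) x)"
        unfolding M_def E_def by (rule staircase_level_sets(1)[where u=u and x=x, OF u_nonneg u_le \<delta>(1) supp])
      also have "\<dots> \<le> \<delta> * (\<Sum>j\<le>M. indicator (V j) x)"
        using V(2) \<delta> by (intro mult_left_mono sum_mono) (auto simp: indicator_def)
      finally show ?thesis .
    qed
    show "\<delta> * (\<Sum>j\<le>M. indicator (V j) x) \<le> u x + e x" for x
    proof -
      have "\<delta> * (\<Sum>j\<le>M. indicator (E j) x) \<le> u x + \<delta> * indicator S x"
        unfolding M_def E_def by (rule staircase_level_sets(2)[where u=u and x=x, OF u_nonneg u_le \<delta>(1) supp])
      moreover have "(\<Sum>j\<le>M. indicator (V j) x) \<le> (\<Sum>j\<le>M. indicator (E j) x + indicator (V j - E j) x :: real)"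
        by (intro sum_mono) (auto simp: indicator_def)
      then have "\<delta> * (\<Sum>j\<le>M. indicator (V j) x)
          \<le> \<delta> * (\<Sum>j\<le>M. indicator (E j) x) + \<delta> * (\<Sum>j\<le>M. indicator (V j - E j) x)"
        using \<delta> by (simp add: mult_left_mono sum.distrib flip: distrib_left)
      ultimately show ?thesis
        unfolding e_def by linarith
    qed
    show "e \<in> borel_measurable lebesgue"
      unfolding e_def by measurable
    show "0 \<le> e x" for x
      using \<delta> by (simp add: e_def sum_nonneg)
    show "e x \<le> N + 3" for x
    proof -
      have "(\<Sum>j\<le>M. indicator (V j - E j) x) \<le> (\<Sum>j\<le>M. 1 :: real)"
        by (intro sum_mono) (simp add: indicator_def)
      then have "e x \<le> \<delta> + \<delta> * (M + 1)"
        using \<delta> unfolding e_def by (intro add_mono mult_left_mono) (auto simp: indicator_def)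
      also have "\<dots> \<le> N + 3"
        using staircase_count(3)[OF N order_refl \<delta>(1)] \<delta> by (simp add: M_def distrib_left)
      finally show ?thesis .
    qed
    show "(\<integral>\<^sup>+x. ennreal (e x) \<partial>lebesgue) \<le> ennreal \<delta> * (emeasure lebesgue S + 1)"
      unfolding e_def using V_small \<delta> by (intro nn_integral_staircase_error) (auto intro: less_imp_le)
  qed
qed

section \<open>Difference quotients and the Jacobi matrix\<close>

definition difference_quotient :: "('a::real_normed_vector \<Rightarrow> 'b::real_normed_vector) \<Rightarrow> 'a \<Rightarrow> real \<Rightarrow> 'a \<Rightarrow> 'b" where
  "difference_quotient f x t y = (1 / t) *\<^sub>R (f (x + t *\<^sub>R y) - f x)"

lemma difference_quotient_tendsto:
  assumes f: "(f has_derivative f') (at x)" and t: "(t \<longlongrightarrow> 0) F" "\<forall>\<^sub>F k in F. t k \<noteq> 0"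
  shows "((\<lambda>k. difference_quotient f x (t k) y) \<longlongrightarrow> f' y) F"
proof -
  have "((\<lambda>h. x + h *\<^sub>R y) has_derivative (\<lambda>h. h *\<^sub>R y)) (at 0)"
    by (auto intro!: derivative_eq_intros)
  from has_derivative_compose[OF this] f
  have "((\<lambda>h. f (x + h *\<^sub>R y)) has_derivative (\<lambda>h. f' (h *\<^sub>R y))) (at 0)"
    by simp
  then have "((\<lambda>h. f (x + h *\<^sub>R y)) has_derivative (\<lambda>h. h *\<^sub>R f' y)) (at 0)"
    by (simp add: linear_cmul[OF has_derivative_linear[OF f]])
  then have "((\<lambda>h. norm (f (x + h *\<^sub>R y) - f x - h *\<^sub>R f' y) / norm h) \<longlongrightarrow> 0) (at 0)"
    by (simp add: has_derivative_at)
  moreover have "norm (f (x + h *\<^sub>R y) - f x - h *\<^sub>R f' y) / norm h = norm (difference_quotient f x h y - f' y)"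
    if "h \<noteq> 0" for h
  proof -
    have "difference_quotient f x h y - f' y = (1 / h) *\<^sub>R (f (x + h *\<^sub>R y) - f x - h *\<^sub>R f' y)"
      using that by (simp add: difference_quotient_def scaleR_diff_right)
    then show ?thesis
      by (simp add: divide_inverse mult.commute)
  qed
  ultimately have "((\<lambda>h. norm (difference_quotient f x h y - f' y)) \<longlongrightarrow> 0) (at 0)"
    by (simp add: Lim_transform_eventually eventually_at_filter)
  then have "((\<lambda>h. difference_quotient f x h y) \<longlongrightarrow> f' y) (at 0)"
    by (simp add: tendsto_norm_zero_iff LIM_zero_iff)
  moreover have "filterlim t (at 0) F"
    using t by (rule filterlim_atI)
  ultimately show ?thesis
    by (rule filterlim_compose)
qed

lemma diffeomorphism_has_derivative_jacobi:
  assumes "diffeomorphism \<psi>"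
  shows "(\<psi> has_derivative (\<lambda>y. jacobi \<psi> x0 *v y)) (at x0)"
proof -
  have D: "(\<psi> has_derivative frechet_derivative \<psi> (at x0)) (at x0)"
    using assms by (simp add: diffeomorphism_def frechet_derivative_works[symmetric])
  then have "linear (frechet_derivative \<psi> (at x0))"
    using has_derivative_linear by blast
  then show ?thesis
    using D by (simp add: jacobi_def matrix_works)
qed

lemma diffeomorphism_jacobi_invertible:
  assumes "diffeomorphism \<psi>"
  shows "invertible (jacobi \<psi> x0)"
proof -
  let ?B = "frechet_derivative (inv \<psi>) (at (\<psi> x0))"
  have "(inv \<psi> has_derivative ?B) (at (\<psi> x0))"
    using assms by (simp add: diffeomorphism_def frechet_derivative_works[symmetric])
  from has_derivative_compose[OF diffeomorphism_has_derivative_jacobi[OF assms] this]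
  have "((\<lambda>x. x) has_derivative (\<lambda>y. ?B (jacobi \<psi> x0 *v y))) (at x0)"
    using assms by (simp add: diffeomorphism_def bij_is_inj)
  then have "(\<lambda>y. ?B (jacobi \<psi> x0 *v y)) = (\<lambda>y. y)"
    using has_derivative_ident has_derivative_unique by blast
  then have "inj ((*v) (jacobi \<psi> x0))"
    by (metis injI)
  then show ?thesis
    by (simp add: invertible_left_inverse matrix_left_invertible_injective)
qed

lemma matrix_vector_mult_measurable_lebesgue:
  fixes J :: "real ^ 'n ^ 'n"
  assumes "invertible J"
  shows "(\<lambda>y. J *v y) \<in> lebesgue \<rightarrow>\<^sub>M lebesgue"
proof (rule measurableI)
  obtain K where K: "J ** K = mat 1" "K ** J = mat 1"
    using assms invertible_def by blast
  fix X :: "(real ^ 'n) set"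
  assume "X \<in> sets lebesgue"
  moreover have "(\<lambda>y. J *v y) -` X = (\<lambda>y. K *v y) ` X"
    using K by (auto simp: image_iff matrix_vector_mul_assoc) (metis matrix_vector_mul_assoc matrix_vector_mul_lid)
  ultimately show "(\<lambda>y. J *v y) -` X \<inter> space lebesgue \<in> sets lebesgue"
    by (simp add: differentiable_image_in_sets_lebesgue bounded_linear_imp_differentiable_on)
qed simp

section \<open>Composition with the derivative\<close>

locale morrey_composition =
  fixes \<phi> :: "real \<Rightarrow> real" and p q Cs Ci Cg Cp :: real and \<psi> :: "real ^ 'n \<Rightarrow> real ^ 'n"
  assumes phi_pos: "\<And>r. 0 < r \<Longrightarrow> 0 < \<phi> r"
    and phi_submult: "\<And>r s. 0 < r \<Longrightarrow> 0 < s \<Longrightarrow> \<phi> (r * s) \<le> Cs * \<phi> r * \<phi> s"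
    and phi_inverse: "\<And>r. 0 < r \<Longrightarrow> \<phi> (1 / r) \<le> Ci / \<phi> r"
    and q_ge_1: "1 \<le> q" and q_le_p: "q \<le> p"
    and growth: "\<And>r. 0 < r \<Longrightarrow> r powr (- real CARD('n) / p) \<le> Cg * \<phi> r" and Cg_pos: "0 < Cg"
    and Cp_nonneg: "0 \<le> Cp"
    and composition_bounded: "\<And>f. f \<in> morrey_space \<phi> q \<Longrightarrow>
      f \<circ> \<psi> \<in> morrey_space \<phi> q \<and> morrey_norm \<phi> q (f \<circ> \<psi>) \<le> ennreal Cp * morrey_norm \<phi> q f"
begin

definition K :: real where "K = Cs * Cs * Cp * Ci"

lemma q_pos: "0 < q"
  using q_ge_1 by simp

lemma norm_le_iff_bounded:
  "0 \<le> M \<Longrightarrow> morrey_norm \<phi> q f \<le> ennreal M \<longleftrightarrow> morrey_bounded \<phi> q (M powr q) f"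
  using morrey_norm_le_iff[of \<phi> q M f] phi_pos q_pos by blast

lemma Cs_pos: "0 < Cs"
proof -
  have "0 < Cs * \<phi> 1"
    using phi_submult[of 1 1] phi_pos[of 1] by (simp add: mult_le_cancel_right1)
  then show ?thesis
    using phi_pos[of 1] zero_less_mult_pos2 by simp
qed

lemma phi_inverse_mult: "0 < t \<Longrightarrow> \<phi> t * \<phi> (1 / t) \<le> Ci"
  using phi_inverse[of t] phi_pos[of t] by (simp add: field_simps)

lemma K_nonneg: "0 \<le> K"
proof -
  have "0 < Ci"
    using phi_inverse_mult[of 1] mult_pos_pos[OF phi_pos phi_pos, of 1 1] by simp
  then show ?thesis
    using Cs_pos Cp_nonneg by (simp add: K_def)
qed

lemma dilation_factors_le:
  assumes t: "0 < t" and B: "0 \<le> B"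
  shows "(Cs * \<phi> t) powr q * (Cp powr q * ((Cs * \<phi> (1 / t)) powr q * B)) \<le> K powr q * B"
proof -
  have C: "0 \<le> Cs * Cs * Cp"
    using Cs_pos Cp_nonneg by simp
  have "0 \<le> \<phi> t * \<phi> (1 / t)"
    using phi_pos[of t] phi_pos[of "1 / t"] t by simp
  then have "(Cs * Cs * Cp * (\<phi> t * \<phi> (1 / t))) powr q * B \<le> K powr q * B"
    unfolding K_def using q_pos B
    by (intro mult_right_mono powr_mono2 mult_nonneg_nonneg[OF C] mult_left_mono[OF phi_inverse_mult[OF t] C])
      simp_all
  then show ?thesis
    unfolding powr_mult by (simp only: mult_ac)
qed

text \<open>Rescale by \<open>1 / t\<close>, compose with \<open>\<psi>\<close>, rescale by \<open>t\<close>: the two dilation factors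
  \<open>\<phi> (1 / t)\<close> and \<open>\<phi> t\<close> cancel up to \<open>Ci\<close>, so the bound is uniform in \<open>t\<close>.\<close>
lemma morrey_bounded_comp_difference_quotient:
  assumes G [measurable]: "G \<in> borel_measurable lebesgue"
    and bounded: "morrey_bounded \<phi> q B G" and B: "0 \<le> B" and t: "0 < t"
  shows "(\<lambda>y. G (difference_quotient \<psi> x0 t y)) \<in> borel_measurable lebesgue"
    and "morrey_bounded \<phi> q (K powr q * B) (\<lambda>y. G (difference_quotient \<psi> x0 t y))"
proof -
  define g where "g z = G (- (1 / t) *\<^sub>R \<psi> x0 + (1 / t) *\<^sub>R z)" for z
  have g [measurable]: "g \<in> borel_measurable lebesgue"
    unfolding g_def using t by (intro measurable_compose[OF lebesgue_scale_measurable G]) auto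
  define B1 where "B1 = (Cs * \<phi> (1 / t)) powr q * B"
  have B1: "0 \<le> B1"
    using B by (simp add: B1_def)
  have "morrey_bounded \<phi> q B1 g"
    unfolding g_def B1_def using t
    by (intro morrey_bounded_dilation[OF phi_pos phi_submult q_pos G B bounded]) auto
  then have "g \<in> morrey_space \<phi> q" and g_norm: "morrey_norm \<phi> q g \<le> ennreal (B1 powr (1 / q))"
    using morrey_space_if_bounded[OF phi_pos q_pos B1 g] by auto
  then have g\<psi>: "g \<circ> \<psi> \<in> morrey_space \<phi> q"
    and "morrey_norm \<phi> q (g \<circ> \<psi>) \<le> ennreal Cp * morrey_norm \<phi> q g"
    using composition_bounded by auto
  note this(2)
  also have "\<dots> \<le> ennreal (Cp * B1 powr (1 / q))"
    using g_norm Cp_nonneg by (simp add: ennreal_mult' mult_left_mono)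
  finally have "morrey_bounded \<phi> q ((Cp * B1 powr (1 / q)) powr q) (g \<circ> \<psi>)"
    using Cp_nonneg B1 by (subst norm_le_iff_bounded[symmetric]) auto
  then have "morrey_bounded \<phi> q (Cp powr q * B1) (\<lambda>z. g (\<psi> z))"
    using Cp_nonneg B1 q_pos by (simp add: powr_mult powr_powr comp_def)
  moreover have g\<psi>_meas [measurable]: "(\<lambda>z. g (\<psi> z)) \<in> borel_measurable lebesgue"
    using g\<psi> by (simp add: morrey_space_def comp_def)
  ultimately have "morrey_bounded \<phi> q ((Cs * \<phi> t) powr q * (Cp powr q * B1)) (\<lambda>y. g (\<psi> (x0 + t *\<^sub>R y)))"
    using Cp_nonneg B1 by (intro morrey_bounded_dilation[OF phi_pos phi_submult q_pos g\<psi>_meas _ _ t]) auto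
  moreover have dq: "(\<lambda>y. g (\<psi> (x0 + t *\<^sub>R y))) = (\<lambda>y. G (difference_quotient \<psi> x0 t y))"
    by (simp add: g_def difference_quotient_def scaleR_diff_right)
  moreover have "(Cs * \<phi> t) powr q * (Cp powr q * B1) \<le> K powr q * B"
    unfolding B1_def by (rule dilation_factors_le[OF t B])
  ultimately show "morrey_bounded \<phi> q (K powr q * B) (\<lambda>y. G (difference_quotient \<psi> x0 t y))"
    by (metis morrey_bounded_mono_bound)
  show "(\<lambda>y. G (difference_quotient \<psi> x0 t y)) \<in> borel_measurable lebesgue"
    unfolding dq[symmetric] using t
    by (intro measurable_compose[OF lebesgue_scale_measurable g\<psi>_meas]) auto
qed

text \<open>Open level sets make the step function lower semicontinuous, so Fatou's lemma passes the
  uniform bound of the difference quotients to the limit \<open>A\<close>.\<close>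
lemma morrey_bounded_step_comp_derivative:
  assumes D: "(\<psi> has_derivative A) (at x0)"
    and V: "\<And>j. open (V j)" and \<delta>: "0 \<le> \<delta>"
    and bounded: "morrey_bounded \<phi> q B (\<lambda>x. \<delta> * (\<Sum>j\<in>J. indicator (V j) x))" and B: "0 \<le> B"
  shows "morrey_bounded \<phi> q (K powr q * B) (\<lambda>y. \<delta> * (\<Sum>j\<in>J. indicator (V j) (A y)))"
proof (rule morrey_boundedI)
  fix a :: "real ^ 'n" and r :: real
  assume r: "0 < r"
  define F where "F = (\<lambda>x. \<delta> * (\<Sum>j\<in>J. indicator (V j) x :: real))"
  have [measurable]: "V j \<in> sets lebesgue" for j
    using V by (simp add: borel_open)
  have F [measurable]: "F \<in> borel_measurable lebesgue"
    unfolding F_def by measurable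
  have F_bounded: "morrey_bounded \<phi> q B F"
    using bounded unfolding F_def .
  let ?t = "\<lambda>k. inverse (real (Suc k))"
  show "ball_integral q (\<lambda>y. \<delta> * (\<Sum>j\<in>J. indicator (V j) (A y))) a r
      \<le> ennreal (K powr q * B * \<phi> r powr q * measure lebesgue (ball a r))"
  proof (rule ball_integral_le_of_eventually_le[where g="\<lambda>k y. F (difference_quotient \<psi> x0 (?t k) y)"])
    show "(\<lambda>y. F (difference_quotient \<psi> x0 (?t k) y)) \<in> borel_measurable lebesgue" for k
      using morrey_bounded_comp_difference_quotient(1)[OF F F_bounded B] by simp
    show "ball_integral q (\<lambda>y. F (difference_quotient \<psi> x0 (?t k) y)) a r
        \<le> ennreal (K powr q * B * \<phi> r powr q * measure lebesgue (ball a r))" for k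
      using morrey_boundedD[OF morrey_bounded_comp_difference_quotient(2)[OF F F_bounded B] r] by simp
    show "\<forall>\<^sub>F k in sequentially. \<bar>\<delta> * (\<Sum>j\<in>J. indicator (V j) (A y))\<bar>
        \<le> \<bar>F (difference_quotient \<psi> x0 (?t k) y)\<bar>" for y
    proof -
      have "(\<lambda>k. difference_quotient \<psi> x0 (?t k) y) \<longlonglongrightarrow> A y"
        using LIMSEQ_inverse_real_of_nat by (intro difference_quotient_tendsto[OF D]) auto
      from sum_indicator_open_eventually_ge[where V=V and J=J, OF V this]
      show ?thesis
        by eventually_elim (use \<delta> in \<open>simp add: F_def sum_nonneg mult_left_mono\<close>)
    qed
  qed (rule q_pos)
qed

text \<open>The error \<open>e\<close> of the open staircase is bounded and has integral \<open>O(\<delta>)\<close>, so by interpolation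
  its Morrey bound is \<open>O(\<delta> powr (q / p))\<close>.\<close>
lemma morrey_bounded_comp_derivative_staircase:
  assumes D: "(\<psi> has_derivative A) (at x0)"
    and u [measurable]: "u \<in> borel_measurable lebesgue"
    and u_nonneg: "\<And>x. 0 \<le> u x" and u_le: "\<And>x. u x \<le> N" and supp: "\<And>x. x \<notin> ball 0 N \<Longrightarrow> u x = 0"
    and bounded: "morrey_bounded \<phi> q B u" and B: "0 \<le> B"
  obtains C where "0 \<le> C"
    and "\<And>\<delta>. 0 < \<delta> \<Longrightarrow> \<delta> \<le> 1 \<Longrightarrow> morrey_bounded \<phi> q ((2 * K) powr q * (B + C * \<delta> powr (q / p))) (\<lambda>y. u (A y))"
proof
  define b where "b = (N + 3) powr (q - 1) * (measure lebesgue (ball (0 :: real ^ 'n) N) + 1)"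
  define m1 where "m1 = measure lebesgue (ball (0 :: real ^ 'n) 1)"
  define C where "C = Cg powr q * ((N + 3) powr q) powr (1 - q / p) * (b / m1) powr (q / p)"
  show "0 \<le> C"
    by (simp add: C_def)
  fix \<delta> :: real
  assume \<delta>: "0 < \<delta>" "\<delta> \<le> 1"
  show "morrey_bounded \<phi> q ((2 * K) powr q * (B + C * \<delta> powr (q / p))) (\<lambda>y. u (A y))"
  proof (rule open_staircase_majorant[OF u u_nonneg u_le supp sets_lebesgue_ball \<delta>])
    fix V :: "nat \<Rightarrow> (real ^ 'n) set" and M :: nat and e :: "real ^ 'n \<Rightarrow> real"
    assume V: "\<And>j. open (V j)"
      and u_le_F: "\<And>x. u x \<le> \<delta> * (\<Sum>j\<le>M. indicator (V j) x)"
      and F_le: "\<And>x. \<delta> * (\<Sum>j\<le>M. indicator (V j) x) \<le> u x + e x"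
      and e [measurable]: "e \<in> borel_measurable lebesgue"
      and e_nonneg: "\<And>x. 0 \<le> e x" and e_le: "\<And>x. e x \<le> N + 3"
      and e_int: "(\<integral>\<^sup>+x. ennreal (e x) \<partial>lebesgue) \<le> ennreal \<delta> * (emeasure lebesgue (ball (0 :: real ^ 'n) N) + 1)"
    have "(\<integral>\<^sup>+x. ennreal (\<bar>e x\<bar> powr q) \<partial>lebesgue) \<le> ennreal ((N + 3) powr (q - 1)) * (\<integral>\<^sup>+x. ennreal (e x) \<partial>lebesgue)"
      using e_nonneg e_le q_ge_1 by (intro nn_integral_powr_le) auto
    also have "\<dots> \<le> ennreal ((N + 3) powr (q - 1)) * (ennreal \<delta> * (emeasure lebesgue (ball (0 :: real ^ 'n) N) + 1))"
      using e_int by (rule mult_left_mono) simp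
    also have "\<dots> = ennreal (b * \<delta>)"
      using \<delta> by (simp add: b_def emeasure_eq_measure2 ennreal_mult ennreal_plus mult_ac)
    finally have "morrey_bounded \<phi> q (Cg powr q * ((N + 3) powr q) powr (1 - q / p) * (b * \<delta> / m1) powr (q / p)) e"
      unfolding m1_def using e_nonneg e_le \<delta>
      by (intro morrey_bounded_interpolation[OF phi_pos growth Cg_pos[THEN less_imp_le] q_pos q_le_p])
        (auto simp: b_def)
    then have e_bounded: "morrey_bounded \<phi> q (C * \<delta> powr (q / p)) e"
      unfolding times_divide_eq_left[symmetric] powr_mult by (simp add: C_def mult_ac)
    have C\<delta>: "0 \<le> C * \<delta> powr (q / p)"
      by (simp add: C_def)
    have "morrey_bounded \<phi> q (2 powr q * (B + C * \<delta> powr (q / p))) (\<lambda>x. \<delta> * (\<Sum>j\<le>M. indicator (V j) x))"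
      using F_le u_nonneg e_nonneg u_le_F \<delta>
      by (intro morrey_bounded_add[OF q_pos u e _ bounded e_bounded B C\<delta>]) (simp add: sum_nonneg)
    then have F_A: "morrey_bounded \<phi> q (K powr q * (2 powr q * (B + C * \<delta> powr (q / p))))
        (\<lambda>y. \<delta> * (\<Sum>j\<le>M. indicator (V j) (A y)))"
      using \<delta> B C\<delta> by (intro morrey_bounded_step_comp_derivative[OF D V]) simp_all
    have "\<bar>u (A y)\<bar> \<le> \<bar>\<delta> * (\<Sum>j\<le>M. indicator (V j) (A y))\<bar>" for y
      using u_le_F[of "A y"] u_nonneg[of "A y"] by linarith
    from morrey_bounded_mono[OF q_pos this F_A] show ?thesis
      by (simp add: powr_mult mult_ac)
  qed
qed

lemma morrey_bounded_comp_derivative_of_bounded: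
  assumes "(\<psi> has_derivative A) (at x0)" and "u \<in> borel_measurable lebesgue"
    and "\<And>x. 0 \<le> u x" and "\<And>x. u x \<le> N" and "\<And>x. x \<notin> ball 0 N \<Longrightarrow> u x = 0"
    and "morrey_bounded \<phi> q B u" and "0 \<le> B"
  shows "morrey_bounded \<phi> q ((2 * K) powr q * B) (\<lambda>y. u (A y))"
proof -
  obtain C where C: "\<And>\<delta>. 0 < \<delta> \<Longrightarrow> \<delta> \<le> 1 \<Longrightarrow>
      morrey_bounded \<phi> q ((2 * K) powr q * (B + C * \<delta> powr (q / p))) (\<lambda>y. u (A y))"
    using morrey_bounded_comp_derivative_staircase[OF assms] by blast
  have "((\<lambda>\<delta>. \<delta> powr (q / p)) \<longlongrightarrow> 0) (at_right (0 :: real))"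
    using q_pos q_le_p eventually_at_right_less[of 0]
    by (intro tendsto_zero_powrI[OF _ tendsto_const]) (auto intro!: tendsto_eq_intros elim: eventually_mono)
  then have "((\<lambda>\<delta>. (2 * K) powr q * (B + C * \<delta> powr (q / p))) \<longlongrightarrow> (2 * K) powr q * (B + C * 0)) (at_right 0)"
    by (intro tendsto_intros)
  moreover have "\<forall>\<^sub>F \<delta> in at_right 0. 0 < \<delta> \<and> \<delta> \<le> (1 :: real)"
    by (auto simp: eventually_at_right[of 0 1] intro: exI[of _ 1])
  ultimately show ?thesis
    by (intro morrey_bounded_limit[where F="at_right 0"]) (auto elim: eventually_mono intro: C)
qed

lemma morrey_norm_comp_derivative_le:
  assumes D: "(\<psi> has_derivative A) (at x0)" and A [measurable]: "A \<in> lebesgue \<rightarrow>\<^sub>M lebesgue"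
    and f: "f \<in> morrey_space \<phi> q"
  shows "morrey_norm \<phi> q (\<lambda>y. f (A y)) \<le> ennreal (2 * K) * morrey_norm \<phi> q f"
proof -
  define U where "U = enn2real (morrey_norm \<phi> q f)"
  have f_meas [measurable]: "f \<in> borel_measurable lebesgue" and U: "morrey_norm \<phi> q f = ennreal U" "0 \<le> U"
    using f by (auto simp: morrey_space_def U_def less_top)
  then have f_bounded: "morrey_bounded \<phi> q (U powr q) f"
    using norm_le_iff_bounded[of U f] by simp
  have "morrey_bounded \<phi> q ((2 * K) powr q * U powr q) (\<lambda>y. f (A y))"
  proof (rule morrey_bounded_comp_of_truncations[OF A f_meas q_pos])
    fix k :: nat
    define u where "u x = min \<bar>f x\<bar> (real k) * indicator (ball 0 (real k)) x" for x
    have u_meas: "u \<in> borel_measurable lebesgue"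
      unfolding u_def by measurable
    have "morrey_bounded \<phi> q (U powr q) u"
      by (rule morrey_bounded_mono[OF q_pos _ f_bounded]) (simp add: u_def indicator_def)
    from morrey_bounded_comp_derivative_of_bounded[OF D u_meas _ _ _ this, where N="real k"]
    have "morrey_bounded \<phi> q ((2 * K) powr q * U powr q) (\<lambda>y. u (A y))"
      by (simp add: u_def indicator_def)
    then show "morrey_bounded \<phi> q ((2 * K) powr q * U powr q)
        (\<lambda>y. min \<bar>f (A y)\<bar> (real k) * indicator (ball 0 (real k)) (A y))"
      by (simp add: u_def)
  qed
  then have "morrey_norm \<phi> q (\<lambda>y. f (A y)) \<le> ennreal (2 * K * U)"
    using K_nonneg U by (simp add: norm_le_iff_bounded powr_mult)
  then show ?thesis
    using K_nonneg U by (simp add: ennreal_mult)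
qed

end

lemma morrey_composition_exists:
  fixes \<psi> :: "real ^ 'n \<Rightarrow> real ^ 'n"
  assumes phi: "\<phi> \<in> Gdec2" and "1 \<le> q" "q \<le> p"
    and growth: "\<exists>C>0. \<forall>r>0. r powr (- real CARD('n) / p) \<le> C * \<phi> r"
    and bounded: "\<exists>C. \<forall>f \<in> morrey_space \<phi> q.
                    f \<circ> \<psi> \<in> morrey_space \<phi> q \<and> morrey_norm \<phi> q (f \<circ> \<psi>) \<le> ennreal C * morrey_norm \<phi> q f"
  shows "\<exists>Cs Ci Cg Cp. morrey_composition \<phi> p q Cs Ci Cg Cp \<psi>"
proof -
  note G = phi[unfolded Gdec2_def mem_Collect_eq]
  have phi_pos: "0 < \<phi> r" if "0 < r" for r
    using G that by blast
  obtain Cs where submult: "\<And>r s. 0 < r \<Longrightarrow> 0 < s \<Longrightarrow> \<phi> (r * s) \<le> Cs * \<phi> r * \<phi> s"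
    using G[THEN conjunct2, THEN conjunct2, THEN conjunct1] by blast
  obtain Ci where inverse: "\<And>r. 0 < r \<Longrightarrow> \<phi> (1 / r) \<le> Ci / \<phi> r"
    using G[THEN conjunct2, THEN conjunct2, THEN conjunct2, THEN conjunct2, THEN conjunct2] by blast
  obtain Cg where Cg: "0 < Cg" and Cg_growth: "\<And>r. 0 < r \<Longrightarrow> r powr (- real CARD('n) / p) \<le> Cg * \<phi> r"
    using growth by blast
  obtain C where C: "\<forall>f \<in> morrey_space \<phi> q.
      f \<circ> \<psi> \<in> morrey_space \<phi> q \<and> morrey_norm \<phi> q (f \<circ> \<psi>) \<le> ennreal C * morrey_norm \<phi> q f"
    using bounded by blast
  have "morrey_composition \<phi> p q Cs Ci Cg (max 0 C) \<psi>"
  proof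
    show "f \<circ> \<psi> \<in> morrey_space \<phi> q \<and> morrey_norm \<phi> q (f \<circ> \<psi>) \<le> ennreal (max 0 C) * morrey_norm \<phi> q f"
      if "f \<in> morrey_space \<phi> q" for f
      using C that by (simp add: ennreal_max_0)
  qed (fact phi_pos submult inverse assms(2,3) Cg Cg_growth max.cobounded1)+
  then show ?thesis
    by blast
qed

theorem corollary4p3:
  fixes \<phi> :: "real \<Rightarrow> real" and p q :: real and \<psi> :: "real ^ 'n \<Rightarrow> real ^ 'n"
  assumes phi: "\<phi> \<in> Gdec2"
    and q1: "1 \<le> q" and qp: "q \<le> p"
    and growth: "\<exists>C>0. \<forall>r>0. r powr (- real CARD('n) / p) \<le> C * \<phi> r"
    and diffeo: "diffeomorphism \<psi>"
    and bounded: "\<exists>C. \<forall>f \<in> morrey_space \<phi> q.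
                    f \<circ> \<psi> \<in> morrey_space \<phi> q \<and>
                    morrey_norm \<phi> q (f \<circ> \<psi>) \<le> ennreal C * morrey_norm \<phi> q f"
  shows "\<exists>C>0. \<forall>x0. \<forall>f \<in> morrey_space \<phi> q.
           morrey_norm \<phi> q (\<lambda>y. f (jacobi \<psi> x0 *v y)) \<le> ennreal C * morrey_norm \<phi> q f"
proof -
  obtain Cs Ci Cg Cp where "morrey_composition \<phi> p q Cs Ci Cg Cp \<psi>"
    using morrey_composition_exists[OF phi q1 qp growth bounded] by blast
  then interpret morrey_composition \<phi> p q Cs Ci Cg Cp \<psi> .
  show ?thesis
  proof (intro exI[of _ "2 * K + 1"] conjI allI ballI)
    show "0 < 2 * K + 1"
      using K_nonneg by simp
    fix x0 and f :: "real ^ 'n \<Rightarrow> real"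
    assume f: "f \<in> morrey_space \<phi> q"
    have "morrey_norm \<phi> q (\<lambda>y. f (jacobi \<psi> x0 *v y)) \<le> ennreal (2 * K) * morrey_norm \<phi> q f"
      using diffeomorphism_has_derivative_jacobi[OF diffeo]
        matrix_vector_mult_measurable_lebesgue[OF diffeomorphism_jacobi_invertible[OF diffeo]] f
      by (rule morrey_norm_comp_derivative_le)
    also have "\<dots> \<le> ennreal (2 * K + 1) * morrey_norm \<phi> q f"
      by (intro mult_right_mono ennreal_leI) simp_all
    finally show "morrey_norm \<phi> q (\<lambda>y. f (jacobi \<psi> x0 *v y)) \<le> ennreal (2 * K + 1) * morrey_norm \<phi> q f" .
  qed
qed

end
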